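(* Let $A = (a_{ij})$ be a random $n\times n$ matrix with $a_{ij}=0$ for $i\ge j$ and with the entries $a_{ij}$, $1\le i<j\le n$, independent standard normal random variables. Then for every $n \ge 1$, \[ \mathbb{E}_A\Big[\min_{z\in\{\pm1\}^n} z^T A z\Big] \ge -0.601\sqrt{n} - 0.833\, n^{3/2}. \]
   Context: Here $z^T A z = \sum_{1\le i<j\le n} a_{ij} z_i z_j$. *)

theory Defs
  imports "HOL-Probability.Probability"
begin

definition upper_pairs :: "nat \<Rightarrow> (nat \<times> nat) set" where
  "upper_pairs n = {(i, j). i < j \<and> j < n}"

definition sign_vectors :: "nat \<Rightarrow> (nat \<Rightarrow> real) set" where
  "sign_vectors n = {z. (\<forall>i<n. z i = 1 \<or> z i = -1) \<and> (\<forall>i\<ge>n. z i = 0)}"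

text \<open>z^T A z for a strictly upper triangular A given by its entries a(i,j), i<j.\<close>
definition quad_form :: "nat \<Rightarrow> (nat \<times> nat \<Rightarrow> real) \<Rightarrow> (nat \<Rightarrow> real) \<Rightarrow> real" where
  "quad_form n a z = (\<Sum>(i, j)\<in>upper_pairs n. a (i, j) * z i * z j)"

end

theory Submission
  imports Defs "HOL-Analysis.Harmonic_Numbers"
begin

text \<open>
  For every fixed sign vector z, the form z^T A z is a sum of N = n(n-1)/2 independent
  standard normals with coefficients +1 or -1, so its moment generating function is
  exp (N t^2 / 2). The minimum over the 2^n sign vectors is then controlled by a union bound
  on exponential moments: by Jensen,
  exp (- t E[min]) <= E[exp (- t min)] <= sum_z E[exp (- t z^T A z)] = 2^n exp (N t^2 / 2),
  hence - E[min] <= (n ln 2 + N t^2 / 2) / t. Taking t = 5 / (3 sqrt n) and ln 2 < 0.6932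
  gives - E[min] <= 0.8326 n^(3/2).
\<close>

lemma ln2_less: "ln (2::real) < 0.6932"
  using ln_approx_bounds[of 2 3] by (simp add: eval_nat_numeral)

lemma powr_three_halves:
  fixes x :: real
  assumes "x \<ge> 0"
  shows "x powr (3/2) = sqrt x ^ 3"
proof -
  have "x powr (3/2) = x powr 1 * x powr (1/2)"
    by (subst powr_add[symmetric]) simp
  then show ?thesis
    using assms by (simp add: powr_half_sqrt power3_eq_cube)
qed

lemma std_normal_density_mult_exp:
  "std_normal_density x * exp (t * x) = exp (t\<^sup>2 / 2) * normal_density t 1 x"
proof -
  have "- x\<^sup>2 / 2 + t * x = t\<^sup>2 / 2 + (- (x - t)\<^sup>2 / 2)"
    by (simp add: power2_eq_square field_simps)
  then have "exp (- x\<^sup>2 / 2) * exp (t * x) = exp (t\<^sup>2 / 2) * exp (- (x - t)\<^sup>2 / 2)"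
    by (simp flip: exp_add)
  then show ?thesis
    unfolding std_normal_density_def by (simp add: normal_density_def)
qed

lemma
  assumes "distributed M lborel Y std_normal_density"
  shows integrable_exp_std_normal: "integrable M (\<lambda>\<omega>. exp (t * Y \<omega>))"
    and integral_exp_std_normal: "(\<integral>\<omega>. exp (t * Y \<omega>) \<partial>M) = exp (t\<^sup>2 / 2)"
proof -
  have "integrable lborel (\<lambda>x. std_normal_density x * exp (t * x))"
    unfolding std_normal_density_mult_exp by simp
  then show "integrable M (\<lambda>\<omega>. exp (t * Y \<omega>))"
    using distributed_integrable[OF assms, of "\<lambda>x. exp (t * x)"] by simp
  have "(\<integral>x. std_normal_density x * exp (t * x) \<partial>lborel) = exp (t\<^sup>2 / 2)"
    unfolding std_normal_density_mult_exp by simp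
  then show "(\<integral>\<omega>. exp (t * Y \<omega>) \<partial>M) = exp (t\<^sup>2 / 2)"
    using distributed_integral[OF assms, of "\<lambda>x. exp (t * x)"] by simp
qed

lemma (in prob_space)
  assumes I: "finite I"
    and indep: "indep_vars (\<lambda>_. borel) X I"
    and normal: "\<And>i. i \<in> I \<Longrightarrow> distributed M lborel (X i) std_normal_density"
  shows integrable_exp_indep_std_normal_sum:
      "integrable M (\<lambda>\<omega>. exp (\<Sum>i\<in>I. c i * X i \<omega>))"
    and expectation_exp_indep_std_normal_sum:
      "expectation (\<lambda>\<omega>. exp (\<Sum>i\<in>I. c i * X i \<omega>)) = exp ((\<Sum>i\<in>I. (c i)\<^sup>2) / 2)"
proof -
  have exp_sum_eq_prod: "exp (\<Sum>i\<in>I. c i * X i \<omega>) = (\<Prod>i\<in>I. exp (c i * X i \<omega>))" for \<omega>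
    using I by (simp add: exp_sum)
  have indep_exp: "indep_vars (\<lambda>_. borel) (\<lambda>i \<omega>. exp (c i * X i \<omega>)) I"
    by (rule indep_vars_compose2[OF indep]) auto
  have integrable: "integrable M (\<lambda>\<omega>. exp (c i * X i \<omega>))" if "i \<in> I" for i
    using integrable_exp_std_normal[OF normal[OF that]] .
  show "integrable M (\<lambda>\<omega>. exp (\<Sum>i\<in>I. c i * X i \<omega>))"
    unfolding exp_sum_eq_prod by (rule indep_vars_integrable[OF I indep_exp integrable])
  have "expectation (\<lambda>\<omega>. exp (\<Sum>i\<in>I. c i * X i \<omega>)) = (\<Prod>i\<in>I. expectation (\<lambda>\<omega>. exp (c i * X i \<omega>)))"
    unfolding exp_sum_eq_prod by (rule indep_vars_lebesgue_integral[OF I indep_exp integrable])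
  also have "\<dots> = (\<Prod>i\<in>I. exp ((c i)\<^sup>2 / 2))"
    by (rule prod.cong) (auto simp: integral_exp_std_normal[OF normal])
  also have "\<dots> = exp ((\<Sum>i\<in>I. (c i)\<^sup>2) / 2)"
    unfolding sum_divide_distrib using I by (rule exp_sum[symmetric])
  finally show "expectation (\<lambda>\<omega>. exp (\<Sum>i\<in>I. c i * X i \<omega>)) = exp ((\<Sum>i\<in>I. (c i)\<^sup>2) / 2)" .
qed

lemma (in prob_space) expectation_Min_ge:
  assumes S: "finite S" "S \<noteq> {}" and t: "t > 0"
    and integrable_Min: "integrable M (\<lambda>\<omega>. Min ((\<lambda>z. Q z \<omega>) ` S))"
    and integrable_exp: "\<And>z. z \<in> S \<Longrightarrow> integrable M (\<lambda>\<omega>. exp (- t * Q z \<omega>))"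
    and mgf: "\<And>z. z \<in> S \<Longrightarrow> expectation (\<lambda>\<omega>. exp (- t * Q z \<omega>)) \<le> exp c"
  shows "- expectation (\<lambda>\<omega>. Min ((\<lambda>z. Q z \<omega>) ` S)) \<le> (ln (card S) + c) / t"
proof -
  define m where "m = (\<lambda>\<omega>. Min ((\<lambda>z. Q z \<omega>) ` S))"
  have exp_Min_le: "exp (- t * m \<omega>) \<le> (\<Sum>z\<in>S. exp (- t * Q z \<omega>))" for \<omega>
  proof -
    have "m \<omega> \<in> (\<lambda>z. Q z \<omega>) ` S"
      unfolding m_def using S by (intro Min_in) auto
    then obtain z where "z \<in> S" "m \<omega> = Q z \<omega>"
      by auto
    then show ?thesis
      using S by (auto intro: member_le_sum)
  qed
  have integrable_sum: "integrable M (\<lambda>\<omega>. \<Sum>z\<in>S. exp (- t * Q z \<omega>))"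
    using integrable_exp by auto
  have "(\<lambda>\<omega>. exp (- t * m \<omega>)) \<in> borel_measurable M"
    using borel_measurable_integrable[OF integrable_Min] unfolding m_def by measurable
  then have integrable_exp_Min: "integrable M (\<lambda>\<omega>. exp (- t * m \<omega>))"
    by (rule Bochner_Integration.integrable_bound[OF integrable_sum])
      (use exp_Min_le in \<open>auto intro!: always_eventually simp: sum_nonneg\<close>)
  have "exp (- t * expectation m) = exp (expectation (\<lambda>\<omega>. - t * m \<omega>))"
    by simp
  also have "\<dots> \<le> expectation (\<lambda>\<omega>. exp (- t * m \<omega>))"
    using integrable_Min integrable_exp_Min unfolding m_def
    by (intro jensens_inequality[where I = UNIV] exp_convex) auto
  also have "\<dots> \<le> expectation (\<lambda>\<omega>. \<Sum>z\<in>S. exp (- t * Q z \<omega>))"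
    by (intro integral_mono integrable_exp_Min integrable_sum exp_Min_le)
  also have "\<dots> = (\<Sum>z\<in>S. expectation (\<lambda>\<omega>. exp (- t * Q z \<omega>)))"
    using integrable_exp by (rule Bochner_Integration.integral_sum)
  also have "\<dots> \<le> card S * exp c"
    using sum_mono[OF mgf] by simp
  finally have "- t * expectation m \<le> ln (card S * exp c)"
    using S by (subst ln_ge_iff) (auto simp: card_gt_0_iff)
  then show ?thesis
    using S t by (simp add: ln_mult card_gt_0_iff field_simps m_def)
qed

lemma finite_upper_pairs: "finite (upper_pairs n)"
  by (rule finite_subset[of _ "{..<n} \<times> {..<n}"]) (auto simp: upper_pairs_def)

lemma card_upper_pairs: "2 * card (upper_pairs n) + n = n * n"
proof (induction n)
  case 0
  then show ?case by (simp add: upper_pairs_def)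
next
  case (Suc n)
  have "upper_pairs (Suc n) = upper_pairs n \<union> (\<lambda>i. (i, n)) ` {..<n}"
    unfolding upper_pairs_def by auto
  moreover have "upper_pairs n \<inter> (\<lambda>i. (i, n)) ` {..<n} = {}"
    by (auto simp: upper_pairs_def)
  ultimately have "card (upper_pairs (Suc n)) = card (upper_pairs n) + n"
    by (simp add: card_Un_disjoint finite_upper_pairs card_image inj_on_def)
  then show ?case
    using Suc by simp
qed

lemma card_upper_pairs_le: "2 * real (card (upper_pairs n)) \<le> (real n)\<^sup>2"
proof -
  have "2 * card (upper_pairs n) \<le> n ^ 2"
    using card_upper_pairs[of n] by (simp add: power2_eq_square)
  then show ?thesis
    by (simp flip: of_nat_power)
qed

lemma sign_vectors_eq_extend_PiE:
  "sign_vectors n = (\<lambda>f i. if i < n then f i else 0) ` PiE {..<n} (\<lambda>_. {1, -1})"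
proof (intro equalityI subsetI)
  fix z assume z: "z \<in> sign_vectors n"
  then have "z = (\<lambda>i. if i < n then restrict z {..<n} i else 0)"
    by (auto simp: sign_vectors_def)
  moreover have "restrict z {..<n} \<in> PiE {..<n} (\<lambda>_. {1, -1})"
    using z by (auto simp: sign_vectors_def)
  ultimately show "z \<in> (\<lambda>f i. if i < n then f i else 0) ` PiE {..<n} (\<lambda>_. {1, -1})"
    by blast
qed (auto simp: sign_vectors_def PiE_def)

lemma finite_sign_vectors: "finite (sign_vectors n)"
  unfolding sign_vectors_eq_extend_PiE by (auto intro: finite_PiE)

lemma card_sign_vectors_le: "card (sign_vectors n) \<le> 2 ^ n"
proof -
  have "card (sign_vectors n) \<le> card (PiE {..<n} (\<lambda>_. {1, -1::real}))"
    unfolding sign_vectors_eq_extend_PiE by (rule card_image_le) (auto intro: finite_PiE)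
  also have "\<dots> = 2 ^ n"
    by (simp add: card_PiE numeral_2_eq_2)
  finally show ?thesis .
qed

lemma sign_vectors_nonempty: "sign_vectors n \<noteq> {}"
proof -
  have "(\<lambda>i. if i < n then 1 else 0) \<in> sign_vectors n"
    by (auto simp: sign_vectors_def)
  then show ?thesis by blast
qed

lemma ln_card_sign_vectors_le: "ln (card (sign_vectors n)) \<le> n * ln 2"
proof -
  have "card (sign_vectors n) > 0"
    using finite_sign_vectors sign_vectors_nonempty by (simp add: card_gt_0_iff)
  then have "ln (card (sign_vectors n)) \<le> ln (2 ^ n)"
    using card_sign_vectors_le[of n] by (simp flip: of_nat_power)
  then show ?thesis
    by (simp add: ln_realpow)
qed

lemma sign_vectors_square:
  assumes "z \<in> sign_vectors n" "i < n"
  shows "(z i)\<^sup>2 = 1"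
  using assms by (auto simp: sign_vectors_def)

lemma (in prob_space)
  assumes indep: "indep_vars (\<lambda>_. borel) X (upper_pairs n)"
    and normal: "\<And>p. p \<in> upper_pairs n \<Longrightarrow> distributed M lborel (X p) std_normal_density"
    and z: "z \<in> sign_vectors n"
  fixes t :: real
  shows integrable_exp_quad_form: "integrable M (\<lambda>\<omega>. exp (t * quad_form n (\<lambda>p. X p \<omega>) z))"
    and expectation_exp_quad_form:
      "expectation (\<lambda>\<omega>. exp (t * quad_form n (\<lambda>p. X p \<omega>) z)) = exp (card (upper_pairs n) * t\<^sup>2 / 2)"
proof -
  define c where "c p = t * z (fst p) * z (snd p)" for p
  have quad_form_eq: "t * quad_form n (\<lambda>p. X p \<omega>) z = (\<Sum>p\<in>upper_pairs n. c p * X p \<omega>)" for \<omega>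
    unfolding quad_form_def c_def sum_distrib_left by (rule sum.cong) (auto simp: algebra_simps)
  have "(c p)\<^sup>2 = t\<^sup>2" if "p \<in> upper_pairs n" for p
    using that sign_vectors_square[OF z]
    by (auto simp: c_def upper_pairs_def power_mult_distrib)
  then have "(\<Sum>p\<in>upper_pairs n. (c p)\<^sup>2) = card (upper_pairs n) * t\<^sup>2"
    by simp
  then show "integrable M (\<lambda>\<omega>. exp (t * quad_form n (\<lambda>p. X p \<omega>) z))"
    and "expectation (\<lambda>\<omega>. exp (t * quad_form n (\<lambda>p. X p \<omega>) z)) = exp (card (upper_pairs n) * t\<^sup>2 / 2)"
    unfolding quad_form_eq
    using integrable_exp_indep_std_normal_sum[OF finite_upper_pairs indep normal]
      expectation_exp_indep_std_normal_sum[OF finite_upper_pairs indep normal]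
    by simp_all
qed

lemma (in prob_space) expectation_Min_quad_form_ge:
  fixes t :: real
  assumes indep: "indep_vars (\<lambda>_. borel) X (upper_pairs n)"
    and normal: "\<And>p. p \<in> upper_pairs n \<Longrightarrow> distributed M lborel (X p) std_normal_density"
    and t: "t > 0"
    and integrable_Min:
      "integrable M (\<lambda>\<omega>. Min ((\<lambda>z. quad_form n (\<lambda>p. X p \<omega>) z) ` sign_vectors n))"
  shows "- expectation (\<lambda>\<omega>. Min ((\<lambda>z. quad_form n (\<lambda>p. X p \<omega>) z) ` sign_vectors n))
    \<le> (n * ln 2 + card (upper_pairs n) * t\<^sup>2 / 2) / t"
proof -
  have mgf: "expectation (\<lambda>\<omega>. exp (- t * quad_form n (\<lambda>p. X p \<omega>) z))
      = exp (card (upper_pairs n) * t\<^sup>2 / 2)" if "z \<in> sign_vectors n" for z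
    using expectation_exp_quad_form[OF indep normal that, of "- t"] by simp
  have "- expectation (\<lambda>\<omega>. Min ((\<lambda>z. quad_form n (\<lambda>p. X p \<omega>) z) ` sign_vectors n))
      \<le> (ln (card (sign_vectors n)) + card (upper_pairs n) * t\<^sup>2 / 2) / t"
    using t indep normal mgf
    by (intro expectation_Min_ge finite_sign_vectors sign_vectors_nonempty integrable_Min
        integrable_exp_quad_form) auto
  also have "\<dots> \<le> (n * ln 2 + card (upper_pairs n) * t\<^sup>2 / 2) / t"
    using t ln_card_sign_vectors_le by (intro divide_right_mono add_mono) auto
  finally show ?thesis .
qed

theorem lemma4:
  fixes M :: "'w measure" and X :: "nat \<times> nat \<Rightarrow> 'w \<Rightarrow> real" and n :: nat
  assumes "prob_space M"
    and "n \<ge> 1"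
    and "prob_space.indep_vars M (\<lambda>_. borel) X (upper_pairs n)"
    and "\<And>p. p \<in> upper_pairs n \<Longrightarrow> distributed M lborel (X p) std_normal_density"
  shows "prob_space.expectation M
           (\<lambda>\<omega>. Min ((\<lambda>z. quad_form n (\<lambda>p. X p \<omega>) z) ` sign_vectors n))
         \<ge> - 0.601 * sqrt (real n) - 0.833 * real n powr (3/2)"
proof -
  interpret prob_space M by (rule assms(1))
  let ?min = "\<lambda>\<omega>. Min ((\<lambda>z. quad_form n (\<lambda>p. X p \<omega>) z) ` sign_vectors n)"
  define s where "s = sqrt (real n)"
  define t where "t = 5 / (3 * s)"
  have s: "s > 0" and n_eq: "real n = s\<^sup>2"
    using assms(2) by (simp_all add: s_def)
  have t: "t > 0"
    using s by (simp add: t_def)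
  have "- expectation ?min \<le> 0.833 * s ^ 3"
  proof (cases "integrable M ?min")
    case True
    have "- expectation ?min \<le> (n * ln 2 + card (upper_pairs n) * t\<^sup>2 / 2) / t"
      by (rule expectation_Min_quad_form_ge[OF assms(3,4) t True])
    also have "\<dots> \<le> (s\<^sup>2 * 0.6932 + s ^ 4 / 2 * t\<^sup>2 / 2) / t"
      using s ln2_less card_upper_pairs_le[of n] unfolding n_eq
      by (intro divide_right_mono add_mono mult_left_mono) (auto simp: t_def power_mult)
    also have "\<dots> \<le> 0.833 * s ^ 3"
      using s by (simp add: t_def field_simps power2_eq_square power3_eq_cube power4_eq_xxxx)
    finally show ?thesis .
  qed (use s in \<open>simp add: not_integrable_integral_eq\<close>)
  then show ?thesis
    using s by (simp add: powr_three_halves s_def[symmetric] algebra_simps)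
qed

end
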